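(* (a) Let $u:\mathbb{Z}^k\to\mathbb{C}$ satisfy, for all $1\le i\le k-1$ and all $\vec n\in\mathbb{Z}^k$ with $n_i=n_{i+1}$, the backward two-body boundary condition $\big((\nabla^{\mathrm{bwd}}_i-q\nabla^{\mathrm{bwd}}_{i+1})u\big)(\vec n)=0$. Then for every $\vec n\in\mathbb{W}^k$, $(1-q)\sum_{i=1}^k(\nabla^{\mathrm{bwd}}_iu)(\vec n)=(\mathcal{H}^{\mathrm{bwd}}u)(\vec n)$ (with $\mathcal{H}^{\mathrm{bwd}}$ applied to the restriction of $u$ to $\mathbb{W}^k$). (b) Let $u:\mathbb{Z}^k\to\mathbb{C}$ satisfy, for all $1\le i\le k-1$ and all $\vec n\in\mathbb{Z}^k$ with $n_i=n_{i+1}$, the forward two-body boundary condition $\big((q\nabla^{\mathrm{fwd}}_i-\nabla^{\mathrm{fwd}}_{i+1})u\big)(\vec n)=0$. Then for every $\vec n\in\mathbb{W}^k$, $(1-q)\sum_{i=1}^k(\nabla^{\mathrm{fwd}}_iu)(\vec n)=(\mathcal{H}^{\mathrm{cfwd}}u)(\vec n)$.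
   Context: Fix $q\in(0,1)$ and an integer $k\ge1$. Let $\mathbb{W}^k=\{\vec n\in\mathbb{Z}^k: n_1\ge\cdots\ge n_k\}$; $\vec n_i^{\pm}=(n_1,\dots,n_i\pm1,\dots,n_k)$. For $\vec n\in\mathbb{W}^k$ write $n_1=\cdots=n_{c_1}>n_{c_1+1}=\cdots=n_{c_1+c_2}>\cdots$, with $M=M(\vec n)$ clusters of sizes $(c_1,\dots,c_M)$. For $u:\mathbb{Z}^k\to\mathbb{C}$, $(\nabla^{\mathrm{bwd}}_iu)(\vec n)=u(\vec n_i^-)-u(\vec n)$ and $(\nabla^{\mathrm{fwd}}_iu)(\vec n)=u(\vec n_i^+)-u(\vec n)$. The $q$-Boson backward generator is $(\mathcal{H}^{\mathrm{bwd}}f)(\vec n)=\sum_{i=1}^{M}(1-q^{c_i})\big(f(\vec n^{-}_{c_1+\cdots+c_i})-f(\vec n)\big)$ and the conjugated forward generator is $(\mathcal{H}^{\mathrm{cfwd}}f)(\vec n)=\sum_{i=1}^{M}(1-q^{c_i})\big(f(\vec n^{+}_{c_1+\cdots+c_{i-1}+1})-f(\vec n)\big)$ (with index $1$ when $i=1$), for $f:\mathbb{W}^k\to\mathbb{C}$. *)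

theory Defs
  imports Complex_Main
begin

text \<open>Vectors in Z^k are int lists of length k; coordinates are 0-based
  (coordinate i of the list is n_{i+1} of the paper).\<close>

definition Weyl :: "nat \<Rightarrow> int list set" where
  "Weyl k = {n. length n = k \<and> (\<forall>i. Suc i < k \<longrightarrow> n ! i \<ge> n ! Suc i)}"

definition vdec :: "int list \<Rightarrow> nat \<Rightarrow> int list" where
  "vdec n i = n[i := n ! i - 1]"

definition vinc :: "int list \<Rightarrow> nat \<Rightarrow> int list" where
  "vinc n i = n[i := n ! i + 1]"

definition nabla_bwd :: "nat \<Rightarrow> (int list \<Rightarrow> complex) \<Rightarrow> int list \<Rightarrow> complex" where
  "nabla_bwd i u n = u (vdec n i) - u n"

definition nabla_fwd :: "nat \<Rightarrow> (int list \<Rightarrow> complex) \<Rightarrow> int list \<Rightarrow> complex" where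
  "nabla_fwd i u n = u (vinc n i) - u n"

function clusters :: "int list \<Rightarrow> nat list" where
  "clusters [] = []"
| "clusters (x # xs) =
     (let m = length (takeWhile (\<lambda>y. y = x) xs) in Suc m # clusters (drop m xs))"
  by pat_completeness auto
termination by (relation "measure length") auto

text \<open>Backward generator: the last particle of cluster i (0-based position
  c_1+...+c_i - 1) jumps down.\<close>
definition H_bwd :: "real \<Rightarrow> (int list \<Rightarrow> complex) \<Rightarrow> int list \<Rightarrow> complex" where
  "H_bwd q f n = (let c = clusters n in
     \<Sum>i<length c. (1 - complex_of_real q ^ (c ! i)) *
        (f (vdec n (sum_list (take (Suc i) c) - 1)) - f n))"

text \<open>Conjugated forward generator: the first particle of cluster i (0-based
  position c_1+...+c_{i-1}) jumps up.\<close>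
definition H_cfwd :: "real \<Rightarrow> (int list \<Rightarrow> complex) \<Rightarrow> int list \<Rightarrow> complex" where
  "H_cfwd q f n = (let c = clusters n in
     \<Sum>i<length c. (1 - complex_of_real q ^ (c ! i)) *
        (f (vinc n (sum_list (take i c))) - f n))"

end

theory Submission
  imports Defs
begin

text \<open>Within a cluster the boundary conditions say that consecutive gradients differ by a
  factor q, so the gradients of a cluster of size c form a geometric progression; multiplying
  its sum by 1 - q telescopes to (1 - q^c) times the gradient of its last particle (backward
  case) or its first particle (forward case), which is exactly the cluster's term in the
  generator. Summing over clusters gives the identity.\<close>

lemma sum_lessThan_add:
  fixes f :: "nat \<Rightarrow> 'a::comm_monoid_add"
  shows "(\<Sum>j<a + b. f j) = (\<Sum>j<a. f j) + (\<Sum>j<b. f (a + j))"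
  by (induction b) (simp_all add: add.assoc)

lemma geometric_block_first:
  fixes g :: "nat \<Rightarrow> 'a::comm_ring_1"
  assumes ratio: "\<And>j. j < m \<Longrightarrow> Q * g j = g (Suc j)"
  shows "(1 - Q) * (\<Sum>j<Suc m. g j) = (1 - Q ^ Suc m) * g 0"
proof -
  have powers: "g j = Q ^ j * g 0" if "j \<le> m" for j
    using that
  proof (induction j)
    case (Suc j)
    then have "g (Suc j) = Q * (Q ^ j * g 0)"
      by (metis Suc_le_lessD ratio Suc_leD)
    then show ?case by (simp add: mult.assoc)
  qed simp
  have "(\<Sum>j<Suc m. g j) = (\<Sum>j<Suc m. Q ^ j * g 0)"
  proof (rule sum.cong)
    fix j assume "j \<in> {..<Suc m}"
    then show "g j = Q ^ j * g 0" by (intro powers) simp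
  qed simp
  also have "\<dots> = (\<Sum>j<Suc m. Q ^ j) * g 0"
    by (rule sum_distrib_right[symmetric])
  finally have "(1 - Q) * (\<Sum>j<Suc m. g j) = ((1 - Q) * (\<Sum>j<Suc m. Q ^ j)) * g 0"
    by (simp only: mult.assoc)
  then show ?thesis
    by (simp only: one_diff_power_eq[symmetric])
qed

lemma geometric_block_last:
  fixes g :: "nat \<Rightarrow> 'a::comm_ring_1"
  assumes ratio: "\<And>j. j < m \<Longrightarrow> g j = Q * g (Suc j)"
  shows "(1 - Q) * (\<Sum>j<Suc m. g j) = (1 - Q ^ Suc m) * g m"
proof -
  have "(1 - Q) * (\<Sum>j<Suc m. g (m - j)) = (1 - Q ^ Suc m) * g (m - 0)"
  proof (rule geometric_block_first)
    fix j assume "j < m"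
    then show "Q * g (m - j) = g (m - Suc j)"
      using ratio[of "m - Suc j"] by (simp add: Suc_diff_Suc)
  qed
  moreover have "(\<Sum>j<Suc m. g (m - j)) = (\<Sum>j<Suc m. g j)"
    using sum.nat_diff_reindex[of g "Suc m"] by simp
  ultimately show ?thesis by simp
qed

lemma nth_Cons_takeWhile_eq:
  assumes "j \<le> length (takeWhile (\<lambda>y. y = x) xs)"
  shows "(x # xs) ! j = x"
proof (cases j)
  case (Suc i)
  then have i: "i < length (takeWhile (\<lambda>y. y = x) xs)"
    using assms by simp
  then have "takeWhile (\<lambda>y. y = x) xs ! i \<in> set (takeWhile (\<lambda>y. y = x) xs)"
    by (rule nth_mem)
  then show ?thesis
    using Suc takeWhile_nth[OF i] set_takeWhileD by fastforce
qed simp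

text \<open>B a c is the contribution of a cluster of size c starting at position a; all that is
  known about such a block is that its entries are equal.\<close>

lemma sum_by_clusters:
  fixes g :: "nat \<Rightarrow> 'a::comm_monoid_add" and B :: "nat \<Rightarrow> nat \<Rightarrow> 'a"
  assumes block: "\<And>a m. a + m < length xs \<Longrightarrow> (\<And>j. j \<le> m \<Longrightarrow> xs ! (a + j) = xs ! a) \<Longrightarrow>
                    (\<Sum>j<Suc m. g (a + j)) = B a (Suc m)"
  shows "(\<Sum>j<length xs. g j) =
         (\<Sum>i<length (clusters xs). B (sum_list (take i (clusters xs))) (clusters xs ! i))"
  using block
proof (induction xs arbitrary: g B rule: clusters.induct)
  case 1
  show ?case by simp
next
  case (2 x xs)
  define m where "m = length (takeWhile (\<lambda>y. y = x) xs)"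
  have m_le: "m \<le> length xs"
    by (simp add: m_def length_takeWhile_le)
  have tail_nth: "(x # xs) ! (Suc m + i) = drop m xs ! i" if "i < length (drop m xs)" for i
    using that m_le by simp
  have first: "(\<Sum>j<Suc m. g j) = B 0 (Suc m)"
    using "2.prems"[of 0 m] m_le nth_Cons_takeWhile_eq[of _ x xs] by (simp add: m_def)
  have rest: "(\<Sum>j<length (drop m xs). g (Suc m + j)) =
      (\<Sum>i<length (clusters (drop m xs)).
         B (Suc m + sum_list (take i (clusters (drop m xs)))) (clusters (drop m xs) ! i))"
  proof (rule "2.IH"[OF m_def])
    fix a m'
    assume "a + m' < length (drop m xs)" and "\<And>j. j \<le> m' \<Longrightarrow> drop m xs ! (a + j) = drop m xs ! a"
    then show "(\<Sum>j<Suc m'. g (Suc m + (a + j))) = B (Suc m + a) (Suc m')"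
      using "2.prems"[of "Suc m + a" m'] tail_nth by (simp add: add.assoc)
  qed
  have clusters_Cons: "clusters (x # xs) = Suc m # clusters (drop m xs)"
    by (simp add: m_def Let_def)
  have "length (x # xs) = Suc m + length (drop m xs)"
    using m_le by simp
  then have "(\<Sum>j<length (x # xs). g j) = B 0 (Suc m) + (\<Sum>j<length (drop m xs). g (Suc m + j))"
    by (simp only: sum_lessThan_add first)
  also have "\<dots> = B 0 (Suc m) + (\<Sum>i<length (clusters (drop m xs)).
         B (Suc m + sum_list (take i (clusters (drop m xs)))) (clusters (drop m xs) ! i))"
    by (simp only: rest)
  also have "\<dots> = (\<Sum>i<length (clusters (x # xs)).
                       B (sum_list (take i (clusters (x # xs)))) (clusters (x # xs) ! i))"
    by (simp only: clusters_Cons length_Cons sum.lessThan_Suc_shift take_Suc_Cons take_0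
          sum_list.Cons sum_list.Nil nth_Cons_0 nth_Cons_Suc add_0_right)
  finally show ?case .
qed

lemma bwd_gradient_sum_eq_H_bwd:
  fixes u :: "int list \<Rightarrow> complex"
  assumes boundary: "\<And>i. Suc i < length n \<Longrightarrow> n ! i = n ! Suc i \<Longrightarrow>
                       nabla_bwd i u n = complex_of_real q * nabla_bwd (Suc i) u n"
  shows "(1 - complex_of_real q) * (\<Sum>i<length n. nabla_bwd i u n) = H_bwd q u n"
proof -
  let ?Q = "complex_of_real q"
  have "(\<Sum>i<length n. (1 - ?Q) * nabla_bwd i u n) =
        (\<Sum>i<length (clusters n). (1 - ?Q ^ (clusters n ! i)) *
           nabla_bwd (sum_list (take i (clusters n)) + clusters n ! i - 1) u n)"
  proof (rule sum_by_clusters)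
    fix a m
    assume "a + m < length n" and equal: "\<And>j. j \<le> m \<Longrightarrow> n ! (a + j) = n ! a"
    have "nabla_bwd (a + j) u n = ?Q * nabla_bwd (a + Suc j) u n" if "j < m" for j
      using boundary[of "a + j"] equal[of j] equal[of "Suc j"] that \<open>a + m < length n\<close> by simp
    then have "(1 - ?Q) * (\<Sum>j<Suc m. nabla_bwd (a + j) u n) = (1 - ?Q ^ Suc m) * nabla_bwd (a + m) u n"
      by (rule geometric_block_last)
    then show "(\<Sum>j<Suc m. (1 - ?Q) * nabla_bwd (a + j) u n) =
               (1 - ?Q ^ Suc m) * nabla_bwd (a + Suc m - 1) u n"
      by (simp add: sum_distrib_left[symmetric] del: sum.lessThan_Suc)
  qed
  also have "\<dots> = H_bwd q u n"
    unfolding H_bwd_def Let_def nabla_bwd_def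
    by (intro sum.cong) (simp_all add: take_Suc_conv_app_nth)
  finally show ?thesis
    by (simp add: sum_distrib_left)
qed

lemma fwd_gradient_sum_eq_H_cfwd:
  fixes u :: "int list \<Rightarrow> complex"
  assumes boundary: "\<And>i. Suc i < length n \<Longrightarrow> n ! i = n ! Suc i \<Longrightarrow>
                       complex_of_real q * nabla_fwd i u n = nabla_fwd (Suc i) u n"
  shows "(1 - complex_of_real q) * (\<Sum>i<length n. nabla_fwd i u n) = H_cfwd q u n"
proof -
  let ?Q = "complex_of_real q"
  have "(\<Sum>i<length n. (1 - ?Q) * nabla_fwd i u n) =
        (\<Sum>i<length (clusters n). (1 - ?Q ^ (clusters n ! i)) *
           nabla_fwd (sum_list (take i (clusters n))) u n)"
  proof (rule sum_by_clusters)
    fix a m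
    assume "a + m < length n" and equal: "\<And>j. j \<le> m \<Longrightarrow> n ! (a + j) = n ! a"
    have "?Q * nabla_fwd (a + j) u n = nabla_fwd (a + Suc j) u n" if "j < m" for j
      using boundary[of "a + j"] equal[of j] equal[of "Suc j"] that \<open>a + m < length n\<close> by simp
    then have "(1 - ?Q) * (\<Sum>j<Suc m. nabla_fwd (a + j) u n) = (1 - ?Q ^ Suc m) * nabla_fwd (a + 0) u n"
      by (rule geometric_block_first)
    then show "(\<Sum>j<Suc m. (1 - ?Q) * nabla_fwd (a + j) u n) = (1 - ?Q ^ Suc m) * nabla_fwd a u n"
      by (simp add: sum_distrib_left[symmetric] del: sum.lessThan_Suc)
  qed
  also have "\<dots> = H_cfwd q u n"
    by (simp add: H_cfwd_def Let_def nabla_fwd_def)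
  finally show ?thesis
    by (simp add: sum_distrib_left)
qed

theorem proposition2p5:
  fixes q :: real and k :: nat
  assumes "0 < q" and "q < 1" and "1 \<le> k"
  shows "(\<forall>u :: int list \<Rightarrow> complex.
            (\<forall>i n. Suc i < k \<longrightarrow> length n = k \<longrightarrow> n ! i = n ! Suc i \<longrightarrow>
               nabla_bwd i u n - complex_of_real q * nabla_bwd (Suc i) u n = 0) \<longrightarrow>
            (\<forall>n \<in> Weyl k.
               (1 - complex_of_real q) * (\<Sum>i<k. nabla_bwd i u n) = H_bwd q u n))
       \<and> (\<forall>u :: int list \<Rightarrow> complex.
            (\<forall>i n. Suc i < k \<longrightarrow> length n = k \<longrightarrow> n ! i = n ! Suc i \<longrightarrow>
               complex_of_real q * nabla_fwd i u n - nabla_fwd (Suc i) u n = 0) \<longrightarrow>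
            (\<forall>n \<in> Weyl k.
               (1 - complex_of_real q) * (\<Sum>i<k. nabla_fwd i u n) = H_cfwd q u n))"
proof -
  have "length n = k" if "n \<in> Weyl k" for n
    using that by (simp add: Weyl_def)
  then show ?thesis
    using bwd_gradient_sum_eq_H_bwd[of _ _ q] fwd_gradient_sum_eq_H_cfwd[of _ q] by force
qed

end
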